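(* Let $n\in\mathbb{R}$, let $\Omega_1\in\mathbb{R}[x]$ be a nonzero polynomial of degree at most $2$, let $L\in\mathbb{R}[x]$ have degree at most $1$, and let $I$ be an open interval on which $\Omega_1$ has no zeros. Consider the quadratic system $$\dot x=\Omega_1(x),\qquad \dot y=(2n+1)L'(x)\Omega_1(x)-\frac{n(n+1)}{2}\Omega_1(x)\Omega_1''(x)-L(x)^2+y^2,$$ and the linear equation $$\Omega_1(x)w''+(\Omega_1'(x)-2L(x))w'+\frac n2\left(4L'(x)-(n+1)\Omega_1''(x)\right)w=0.\qquad( * )$$ (i) For every solution $p\in C^2(I)$ of $( * )$, the function $f_p(x,y)=p(x)\,y+\Omega_1(x)p'(x)-L(x)p(x)$ satisfies $\Omega_1\,\partial_xf_p+\dot y\,\partial_yf_p=(y+L(x))\,f_p$ on $I\times\mathbb{R}$ (here $\dot y$ denotes the right-hand side of the second equation). (ii) If $\{p_1,p_2\}$ is a fundamental system of solutions of $( * )$ on $I$, then $H=f_{p_1}/f_{p_2}$ is a first integral of the system on the open set $\{(x,y)\in I\times\mathbb{R}: f_{p_2}(x,y)\neq0\}$.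
   Context: A first integral of the planar system $\dot x=P,\dot y=Q$ on an open set $U$ is a $C^1$ function $H$ with $P\partial_xH+Q\partial_yH=0$ on $U$ which is not constant on any nonempty open subset of $U$. *)

theory Defs
  imports "HOL-Analysis.Analysis" "HOL-Computational_Algebra.Polynomial"
begin

definition C2_on :: "real set \<Rightarrow> (real \<Rightarrow> real) \<Rightarrow> bool" where
  "C2_on I p \<longleftrightarrow> (\<forall>x\<in>I. p differentiable (at x)) \<and>
     (\<forall>x\<in>I. deriv p differentiable (at x)) \<and> continuous_on I (deriv (deriv p))"

definition is_sol :: "real poly \<Rightarrow> real poly \<Rightarrow> real \<Rightarrow> real set \<Rightarrow> (real \<Rightarrow> real) \<Rightarrow> bool" where
  "is_sol Om L n I p \<longleftrightarrow> C2_on I p \<and>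
     (\<forall>x\<in>I. poly Om x * deriv (deriv p) x
        + (poly (pderiv Om) x - 2 * poly L x) * deriv p x
        + n / 2 * (4 * poly (pderiv L) x - (n + 1) * poly (pderiv (pderiv Om)) x) * p x = 0)"

definition fundamental_system :: "real poly \<Rightarrow> real poly \<Rightarrow> real \<Rightarrow> real set \<Rightarrow> (real \<Rightarrow> real) \<Rightarrow> (real \<Rightarrow> real) \<Rightarrow> bool" where
  "fundamental_system Om L n I p1 p2 \<longleftrightarrow> is_sol Om L n I p1 \<and> is_sol Om L n I p2 \<and>
     (\<forall>c1 c2::real. (\<forall>x\<in>I. c1 * p1 x + c2 * p2 x = 0) \<longrightarrow> c1 = 0 \<and> c2 = 0)"

definition fp :: "real poly \<Rightarrow> real poly \<Rightarrow> (real \<Rightarrow> real) \<Rightarrow> real \<Rightarrow> real \<Rightarrow> real" where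
  "fp Om L p x y = p x * y + poly Om x * deriv p x - poly L x * p x"

definition Qsys :: "real poly \<Rightarrow> real poly \<Rightarrow> real \<Rightarrow> real \<Rightarrow> real \<Rightarrow> real" where
  "Qsys Om L n x y = (2 * n + 1) * poly (pderiv L) x * poly Om x
     - n * (n + 1) / 2 * poly Om x * poly (pderiv (pderiv Om)) x - (poly L x)^2 + y^2"

definition first_integral :: "(real \<times> real \<Rightarrow> real) \<Rightarrow> (real \<times> real \<Rightarrow> real) \<Rightarrow> (real \<times> real) set \<Rightarrow> (real \<times> real \<Rightarrow> real) \<Rightarrow> bool" where
  "first_integral P Q U H \<longleftrightarrow>
     (\<exists>Hx Hy. (\<forall>z\<in>U. (H has_derivative (\<lambda>h. Hx z * fst h + Hy z * snd h)) (at z)) \<and>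
        continuous_on U Hx \<and> continuous_on U Hy \<and>
        (\<forall>z\<in>U. P z * Hx z + Q z * Hy z = 0)) \<and>
     (\<forall>V. open V \<and> V \<noteq> {} \<and> V \<subseteq> U \<longrightarrow> \<not> (\<exists>c. \<forall>z\<in>V. H z = c))"

end

theory Submission
  imports Defs
begin

text \<open>The function \<open>f\<^sub>p\<close> is a Darboux function of the quadratic system with cofactor
  \<open>y + L(x)\<close>: the defect in the cofactor identity is \<open>\<Omega>\<^sub>1\<close> times the left-hand side of the linear equation.
  Two Darboux functions with the same cofactor have a quotient annihilated by the vector field.
  The quotient \<open>f\<^sub>p\<^sub>1 / f\<^sub>p\<^sub>2\<close> is not locally constant: if \<open>f\<^sub>p\<^sub>1 = c f\<^sub>p\<^sub>2\<close> near a point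
  \<open>(x\<^sub>0, y\<^sub>0)\<close>, comparing two values of \<open>y\<close> gives \<open>q(x\<^sub>0) = q'(x\<^sub>0) = 0\<close> for \<open>q = p\<^sub>1 - c p\<^sub>2\<close>,
  and uniqueness for that equation, via a Gronwall estimate on \<open>q\<^sup>2 + q'\<^sup>2\<close>, forces \<open>q = 0\<close> on the
  connected set \<open>I\<close>, contradicting independence.\<close>

lemma gronwall_zero_right:
  fixes E E' :: "real \<Rightarrow> real"
  assumes "a \<le> b" "E a = 0" "E b \<ge> 0"
    and deriv: "\<And>t. a \<le> t \<Longrightarrow> t \<le> b \<Longrightarrow> (E has_real_derivative E' t) (at t)"
    and growth: "\<And>t. a \<le> t \<Longrightarrow> t \<le> b \<Longrightarrow> E' t \<le> K * E t"
  shows "E b = 0"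
proof -
  define g where "g t = E t * exp (- K * t)" for t
  have "g b \<le> g a"
  proof (rule DERIV_nonpos_imp_nonincreasing[OF \<open>a \<le> b\<close>])
    fix t assume t: "a \<le> t" "t \<le> b"
    have "(g has_real_derivative (E' t - K * E t) * exp (- K * t)) (at t)"
      unfolding g_def using deriv[OF t]
      by (auto intro!: derivative_eq_intros simp: algebra_simps)
    moreover have "(E' t - K * E t) * exp (- K * t) \<le> 0"
      using growth[OF t] by (simp add: mult_nonpos_nonneg)
    ultimately show "\<exists>y. (g has_real_derivative y) (at t) \<and> y \<le> 0" by blast
  qed
  then have "E b * exp (- K * b) \<le> 0" using \<open>E a = 0\<close> by (simp add: g_def)
  then show ?thesis using \<open>E b \<ge> 0\<close> by (simp add: mult_le_0_iff)
qed

lemma gronwall_zero: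
  fixes E E' :: "real \<Rightarrow> real"
  assumes "s \<in> {u..v}" "x \<in> {u..v}" "E s = 0"
    and nonneg: "\<And>t. t \<in> {u..v} \<Longrightarrow> E t \<ge> 0"
    and deriv: "\<And>t. t \<in> {u..v} \<Longrightarrow> (E has_real_derivative E' t) (at t)"
    and growth: "\<And>t. t \<in> {u..v} \<Longrightarrow> \<bar>E' t\<bar> \<le> K * E t"
  shows "E x = 0"
proof (cases "s \<le> x")
  case True
  show ?thesis
  proof (rule gronwall_zero_right[where E = E, OF True \<open>E s = 0\<close>])
    fix t assume "s \<le> t" "t \<le> x"
    then have "t \<in> {u..v}" using assms(1,2) by auto
    then show "(E has_real_derivative E' t) (at t)" "E' t \<le> K * E t"
      using deriv growth[of t] by auto
  qed (use nonneg assms(2) in auto)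
next
  case False
  have "E (- (- x)) = 0"
  proof (rule gronwall_zero_right[where E = "\<lambda>t. E (- t)" and E' = "\<lambda>t. - E' (- t)"])
    fix t assume "- s \<le> t" "t \<le> - x"
    then have "- t \<in> {u..v}" using assms(1,2) by auto
    have "((\<lambda>t. E (- t)) has_real_derivative E' (- t) * - 1) (at t)"
      by (rule DERIV_chain2[of E "E' (- t)" uminus t, OF deriv[OF \<open>- t \<in> {u..v}\<close>]])
         (auto intro!: derivative_eq_intros)
    then show "((\<lambda>t. E (- t)) has_real_derivative - E' (- t)) (at t)" by simp
    show "- E' (- t) \<le> K * E (- t)" using growth[OF \<open>- t \<in> {u..v}\<close>] by linarith
  qed (use False nonneg assms in auto)
  then show ?thesis by simp
qed

lemma energy_derivative_bound:
  fixes q q' q'' M :: real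
  assumes "M \<ge> 0" "\<bar>q''\<bar> \<le> M * (\<bar>q'\<bar> + \<bar>q\<bar>)"
  shows "\<bar>2 * q * q' + 2 * q' * q''\<bar> \<le> (1 + 3 * M) * (q\<^sup>2 + q'\<^sup>2)"
proof -
  have amgm: "2 * \<bar>q\<bar> * \<bar>q'\<bar> \<le> q\<^sup>2 + q'\<^sup>2"
    using sum_squares_bound[of "\<bar>q\<bar>" "\<bar>q'\<bar>"] by simp
  have "\<bar>2 * q' * q''\<bar> \<le> 2 * \<bar>q'\<bar> * (M * (\<bar>q'\<bar> + \<bar>q\<bar>))"
    using assms(2) by (simp add: abs_mult mult_left_mono)
  also have "\<dots> = M * (2 * q'\<^sup>2 + 2 * \<bar>q\<bar> * \<bar>q'\<bar>)"
    by (simp add: algebra_simps power2_eq_square)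
  also have "\<dots> \<le> M * (3 * (q\<^sup>2 + q'\<^sup>2))"
    using amgm assms(1) zero_le_power2[of q] by (intro mult_left_mono) (auto simp only: distrib_left)
  finally have "\<bar>2 * q' * q''\<bar> \<le> 3 * M * (q\<^sup>2 + q'\<^sup>2)" by (simp add: algebra_simps)
  moreover have "\<bar>2 * q * q'\<bar> \<le> q\<^sup>2 + q'\<^sup>2"
    using amgm by (simp add: abs_mult)
  ultimately show ?thesis by (simp add: algebra_simps)
qed

lemma linear_ode2_zero_on_Icc:
  fixes q q' q'' :: "real \<Rightarrow> real"
  assumes "s \<in> {u..v}" "x \<in> {u..v}" "q s = 0" "q' s = 0" "M \<ge> 0"
    and dq: "\<And>t. t \<in> {u..v} \<Longrightarrow> (q has_real_derivative q' t) (at t)"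
    and dq': "\<And>t. t \<in> {u..v} \<Longrightarrow> (q' has_real_derivative q'' t) (at t)"
    and bound: "\<And>t. t \<in> {u..v} \<Longrightarrow> \<bar>q'' t\<bar> \<le> M * (\<bar>q' t\<bar> + \<bar>q t\<bar>)"
  shows "q x = 0 \<and> q' x = 0"
proof -
  have "(q x)\<^sup>2 + (q' x)\<^sup>2 = 0"
  proof (rule gronwall_zero[where E = "\<lambda>t. (q t)\<^sup>2 + (q' t)\<^sup>2"
        and E' = "\<lambda>t. 2 * q t * q' t + 2 * q' t * q'' t" and K = "1 + 3 * M"])
    fix t assume t: "t \<in> {u..v}"
    show "((\<lambda>t. (q t)\<^sup>2 + (q' t)\<^sup>2) has_real_derivative 2 * q t * q' t + 2 * q' t * q'' t) (at t)"
      using dq[OF t] dq'[OF t] by (auto intro!: derivative_eq_intros)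
    show "\<bar>2 * q t * q' t + 2 * q' t * q'' t\<bar> \<le> (1 + 3 * M) * ((q t)\<^sup>2 + (q' t)\<^sup>2)"
      using energy_derivative_bound[OF \<open>M \<ge> 0\<close> bound[OF t]] .
  qed (use assms in auto)
  then show ?thesis by (simp add: add_nonneg_eq_0_iff)
qed

lemma linear_ode2_zero_near:
  fixes q q' q'' a b c :: "real \<Rightarrow> real"
  assumes "open I" "z \<in> I" "q z = 0" "q' z = 0"
    and dq: "\<And>x. x \<in> I \<Longrightarrow> (q has_real_derivative q' x) (at x)"
    and dq': "\<And>x. x \<in> I \<Longrightarrow> (q' has_real_derivative q'' x) (at x)"
    and cont: "continuous_on I a" "continuous_on I b" "continuous_on I c"
    and leading: "\<And>x. x \<in> I \<Longrightarrow> a x \<noteq> 0"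
    and ode: "\<And>x. x \<in> I \<Longrightarrow> a x * q'' x + b x * q' x + c x * q x = 0"
  obtains d where "d > 0" "ball z d \<subseteq> {x \<in> I. q x = 0 \<and> q' x = 0}"
proof -
  obtain d where "d > 0" and "cball z d \<subseteq> I"
    using \<open>open I\<close> \<open>z \<in> I\<close> open_contains_cball by blast
  then have Icc: "{z - d..z + d} \<subseteq> I" by (simp add: cball_eq_atLeastAtMost)
  have "continuous_on {z - d..z + d} (\<lambda>x. \<bar>b x / a x\<bar> + \<bar>c x / a x\<bar>)"
    using continuous_on_subset[OF cont(1) Icc] continuous_on_subset[OF cont(2) Icc]
      continuous_on_subset[OF cont(3) Icc] Icc leading
    by (intro continuous_intros) auto
  then obtain M where "M \<ge> 0" and M: "\<And>x. x \<in> {z - d..z + d} \<Longrightarrow> \<bar>b x / a x\<bar> + \<bar>c x / a x\<bar> \<le> M"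
    by (rule continuous_on_compact_bound[OF compact_Icc]) simp
  have bound: "\<bar>q'' x\<bar> \<le> M * (\<bar>q' x\<bar> + \<bar>q x\<bar>)" if x: "x \<in> {z - d..z + d}" for x
  proof -
    have "x \<in> I" using Icc x by blast
    then have "q'' x = - (b x / a x) * q' x - (c x / a x) * q x"
      using ode[of x] leading[of x] by (simp add: field_simps)
    then have "\<bar>q'' x\<bar> \<le> \<bar>- (b x / a x) * q' x\<bar> + \<bar>(c x / a x) * q x\<bar>"
      by (simp only: abs_triangle_ineq4)
    also have "\<dots> = \<bar>b x / a x\<bar> * \<bar>q' x\<bar> + \<bar>c x / a x\<bar> * \<bar>q x\<bar>"
      by (simp only: abs_mult abs_minus_cancel)
    also have "\<dots> \<le> M * \<bar>q' x\<bar> + M * \<bar>q x\<bar>"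
      using M[OF x] abs_ge_zero[of "b x / a x"] abs_ge_zero[of "c x / a x"]
      by (intro add_mono mult_right_mono) (linarith | simp)+
    finally show ?thesis by (simp add: distrib_left)
  qed
  have "ball z d \<subseteq> {x \<in> I. q x = 0 \<and> q' x = 0}"
  proof
    fix x assume "x \<in> ball z d"
    then have x: "x \<in> {z - d..z + d}" by (auto simp: dist_real_def)
    have "q x = 0 \<and> q' x = 0"
      by (rule linear_ode2_zero_on_Icc[where s = z, OF _ x _ _ \<open>M \<ge> 0\<close> _ _ bound])
        (use assms(3,4) \<open>d > 0\<close> Icc dq dq' in \<open>auto simp: subset_iff\<close>)
    then show "x \<in> {x \<in> I. q x = 0 \<and> q' x = 0}" using x Icc by auto
  qed
  with \<open>d > 0\<close> show ?thesis by (rule that)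
qed

lemma linear_ode2_unique:
  fixes q q' q'' a b c :: "real \<Rightarrow> real"
  assumes "open I" "connected I" "x0 \<in> I" "q x0 = 0" "q' x0 = 0"
    and dq: "\<And>x. x \<in> I \<Longrightarrow> (q has_real_derivative q' x) (at x)"
    and dq': "\<And>x. x \<in> I \<Longrightarrow> (q' has_real_derivative q'' x) (at x)"
    and cont: "continuous_on I a" "continuous_on I b" "continuous_on I c"
    and leading: "\<And>x. x \<in> I \<Longrightarrow> a x \<noteq> 0"
    and ode: "\<And>x. x \<in> I \<Longrightarrow> a x * q'' x + b x * q' x + c x * q x = 0"
    and "x \<in> I"
  shows "q x = 0"
proof -
  define Z where "Z = {x \<in> I. q x = 0 \<and> q' x = 0}"
  have "open Z"
    unfolding open_contains_ball
  proof
    fix z assume "z \<in> Z"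
    then obtain d where "d > 0" "ball z d \<subseteq> Z"
      using linear_ode2_zero_near[OF \<open>open I\<close> _ _ _ dq dq' cont leading ode]
      unfolding Z_def by blast
    then show "\<exists>e>0. ball z e \<subseteq> Z" by blast
  qed
  then have "openin (top_of_set I) Z" by (intro open_subset) (auto simp: Z_def)
  moreover have "closedin (top_of_set I) Z"
  proof -
    have "continuous_on I q" "continuous_on I q'"
      using dq dq' by (auto intro!: continuous_at_imp_continuous_on DERIV_isCont)
    then have "closedin (top_of_set I) ({x \<in> I. q x = 0} \<inter> {x \<in> I. q' x = 0})"
      by (intro closedin_Int continuous_closedin_preimage_constant)
    then show ?thesis by (simp add: Z_def Collect_conj_eq Int_assoc Int_left_commute)
  qed
  moreover have "x0 \<in> Z" using assms(3-5) by (simp add: Z_def)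
  ultimately have "Z = I" using \<open>connected I\<close> unfolding connected_clopen by blast
  then show ?thesis using \<open>x \<in> I\<close> by (auto simp: Z_def)
qed

lemma C2_on_DERIV:
  assumes "C2_on I p" "x \<in> I"
  shows "(p has_real_derivative deriv p x) (at x)"
    and "(deriv p has_real_derivative deriv (deriv p) x) (at x)"
  using assms by (auto simp: C2_on_def DERIV_deriv_iff_real_differentiable)

lemma C2_on_continuous_on:
  assumes "C2_on I p"
  shows "continuous_on I p" "continuous_on I (deriv p)" "continuous_on I (deriv (deriv p))"
  using C2_on_DERIV[OF assms] assms
  by (auto simp: C2_on_def intro!: continuous_at_imp_continuous_on DERIV_isCont)

definition fp_x :: "real poly \<Rightarrow> real poly \<Rightarrow> (real \<Rightarrow> real) \<Rightarrow> real \<Rightarrow> real \<Rightarrow> real" where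
  "fp_x Om L p x y = deriv p x * y + poly (pderiv Om) x * deriv p x + poly Om x * deriv (deriv p) x
     - poly (pderiv L) x * p x - poly L x * deriv p x"

lemma fp_has_real_derivative_x:
  assumes "C2_on I p" "x \<in> I"
  shows "((\<lambda>t. fp Om L p t y) has_real_derivative fp_x Om L p x y) (at x)"
  unfolding fp_def fp_x_def using C2_on_DERIV[OF assms]
  by (auto intro!: derivative_eq_intros simp: algebra_simps)

lemma fp_has_real_derivative_y: "((\<lambda>s. fp Om L p x s) has_real_derivative p x) (at y)"
  unfolding fp_def by (auto intro!: derivative_eq_intros)

lemma has_derivative_fst_compose:
  assumes "(g has_real_derivative D) (at x)"
  shows "((\<lambda>z. g (fst z)) has_derivative (\<lambda>h. D * fst h)) (at (x, y))"
proof -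
  have "((g \<circ> fst) has_derivative ((*) D \<circ> fst)) (at (x, y))"
    by (rule diff_chain_at[OF has_derivative_fst[OF has_derivative_ident]])
       (use assms in \<open>simp add: has_field_derivative_def\<close>)
  then show ?thesis by (simp add: o_def)
qed

lemma fp_has_derivative:
  assumes "C2_on I p" "fst z \<in> I"
  shows "((\<lambda>z. fp Om L p (fst z) (snd z)) has_derivative
      (\<lambda>h. fp_x Om L p (fst z) (snd z) * fst h + p (fst z) * snd h)) (at z)"
proof -
  obtain x y where z: "z = (x, y)" by (cases z)
  define g where "g t = poly Om t * deriv p t - poly L t * p t" for t
  have "x \<in> I" using assms(2) z by simp
  note p' = C2_on_DERIV[OF assms(1) this]
  have "(g has_real_derivative fp_x Om L p x 0) (at x)"
    unfolding g_def fp_x_def using p' by (auto intro!: derivative_eq_intros simp: algebra_simps)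
  from has_derivative_add[OF has_derivative_mult[OF has_derivative_fst_compose[OF p'(1)]
        has_derivative_snd[OF has_derivative_ident]] has_derivative_fst_compose[OF this]]
  have "((\<lambda>z. p (fst z) * snd z + g (fst z)) has_derivative
      (\<lambda>h. fp_x Om L p x y * fst h + p x * snd h)) (at (x, y))"
    by (rule has_derivative_eq_rhs) (auto simp: fun_eq_iff fp_x_def algebra_simps)
  then show ?thesis by (simp add: z fp_def g_def algebra_simps)
qed

lemma continuous_on_fst_compose:
  "continuous_on I f \<Longrightarrow> continuous_on {z. fst z \<in> I} (\<lambda>z. f (fst z))"
  by (rule continuous_on_compose2[OF _ continuous_on_fst[OF continuous_on_id]]) auto

lemma continuous_on_fp_x:
  assumes "C2_on I p"
  shows "continuous_on {z. fst z \<in> I} (\<lambda>z. fp_x Om L p (fst z) (snd z))"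
  using continuous_on_fst_compose[OF C2_on_continuous_on(1)[OF assms]]
    continuous_on_fst_compose[OF C2_on_continuous_on(2)[OF assms]]
    continuous_on_fst_compose[OF C2_on_continuous_on(3)[OF assms]]
  unfolding fp_x_def by (intro continuous_intros) auto

lemma fp_darboux:
  assumes "is_sol Om L n I p" "x \<in> I"
  shows "poly Om x * fp_x Om L p x y + Qsys Om L n x y * p x = (y + poly L x) * fp Om L p x y"
proof -
  have "poly Om x * fp_x Om L p x y + Qsys Om L n x y * p x - (y + poly L x) * fp Om L p x y
     = poly Om x * (poly Om x * deriv (deriv p) x
        + (poly (pderiv Om) x - 2 * poly L x) * deriv p x
        + n / 2 * (4 * poly (pderiv L) x - (n + 1) * poly (pderiv (pderiv Om)) x) * p x)"
    unfolding fp_x_def Qsys_def fp_def by (simp add: field_simps power2_eq_square)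
  also have "\<dots> = 0" using assms unfolding is_sol_def by simp
  finally show ?thesis by simp
qed

lemma sol_eq_scaled_if_fp_eq_scaled:
  assumes "open I" "connected I" and Om_nz: "\<forall>x\<in>I. poly Om x \<noteq> 0"
    and sols: "is_sol Om L n I p1" "is_sol Om L n I p2"
    and "x0 \<in> I" "y0 \<noteq> y1"
    and scaled: "fp Om L p1 x0 y0 = c * fp Om L p2 x0 y0" "fp Om L p1 x0 y1 = c * fp Om L p2 x0 y1"
    and "x \<in> I"
  shows "p1 x = c * p2 x"
proof -
  define q where "q t = p1 t - c * p2 t" for t
  define q' where "q' t = deriv p1 t - c * deriv p2 t" for t
  define q'' where "q'' t = deriv (deriv p1) t - c * deriv (deriv p2) t" for t
  have fp_q: "q x0 * y + poly Om x0 * q' x0 - poly L x0 * q x0 = fp Om L p1 x0 y - c * fp Om L p2 x0 y"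
    for y by (simp add: q_def q'_def fp_def algebra_simps)
  then have lin: "q x0 * y + poly Om x0 * q' x0 - poly L x0 * q x0 = 0"
    if "fp Om L p1 x0 y = c * fp Om L p2 x0 y" for y
    using that by simp
  have "q x0 * (y1 - y0) = 0"
    unfolding right_diff_distrib using lin[OF scaled(1)] lin[OF scaled(2)] by linarith
  then have q0: "q x0 = 0" using \<open>y0 \<noteq> y1\<close> by simp
  then have q'0: "q' x0 = 0"
    using lin[OF scaled(1)] Om_nz \<open>x0 \<in> I\<close> by simp
  have C2: "C2_on I p1" "C2_on I p2" using sols by (simp_all add: is_sol_def)
  have "q x = 0"
  proof (rule linear_ode2_unique[where q = q and q' = q' and q'' = q'' and a = "poly Om"
        and b = "\<lambda>t. poly (pderiv Om) t - 2 * poly L t"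
        and c = "\<lambda>t. n / 2 * (4 * poly (pderiv L) t - (n + 1) * poly (pderiv (pderiv Om)) t)",
        OF \<open>open I\<close> \<open>connected I\<close> \<open>x0 \<in> I\<close> q0 q'0])
    fix t assume "t \<in> I"
    show "(q has_real_derivative q' t) (at t)" "(q' has_real_derivative q'' t) (at t)"
      unfolding q_def q'_def q''_def using C2_on_DERIV[OF C2(1) \<open>t \<in> I\<close>] C2_on_DERIV[OF C2(2) \<open>t \<in> I\<close>]
      by (auto intro!: derivative_eq_intros)
    let ?lhs = "\<lambda>p. poly Om t * deriv (deriv p) t + (poly (pderiv Om) t - 2 * poly L t) * deriv p t
        + n / 2 * (4 * poly (pderiv L) t - (n + 1) * poly (pderiv (pderiv Om)) t) * p t"
    have "?lhs p1 = 0" "?lhs p2 = 0" using sols \<open>t \<in> I\<close> by (simp_all add: is_sol_def)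
    moreover have "poly Om t * q'' t + (poly (pderiv Om) t - 2 * poly L t) * q' t
        + n / 2 * (4 * poly (pderiv L) t - (n + 1) * poly (pderiv (pderiv Om)) t) * q t
        = ?lhs p1 - c * ?lhs p2"
      by (simp add: q_def q'_def q''_def field_simps)
    ultimately show "poly Om t * q'' t + (poly (pderiv Om) t - 2 * poly L t) * q' t
        + n / 2 * (4 * poly (pderiv L) t - (n + 1) * poly (pderiv (pderiv Om)) t) * q t = 0"
      by simp
  qed (use Om_nz \<open>x \<in> I\<close> in \<open>auto intro!: continuous_intros\<close>)
  then show ?thesis by (simp add: q_def)
qed

lemma fp_not_locally_proportional:
  assumes "open I" "connected I" "\<forall>x\<in>I. poly Om x \<noteq> 0"
    and fs: "fundamental_system Om L n I p1 p2"
    and "open V" "V \<noteq> {}" "V \<subseteq> {z. fst z \<in> I}"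
  shows "\<exists>z\<in>V. fp Om L p1 (fst z) (snd z) \<noteq> c * fp Om L p2 (fst z) (snd z)"
proof (rule ccontr)
  assume "\<not> ?thesis"
  then have scaled: "fp Om L p1 x y = c * fp Om L p2 x y" if "(x, y) \<in> V" for x y
    using that by fastforce
  obtain x0 y0 where z0: "(x0, y0) \<in> V" using \<open>V \<noteq> {}\<close> by auto
  then obtain e where "e > 0" "ball (x0, y0) e \<subseteq> V"
    using \<open>open V\<close> open_contains_ball by blast
  then have z1: "(x0, y0 + e / 2) \<in> V"
    by (auto simp: subset_iff dist_Pair_Pair dist_real_def)
  have "p1 x = c * p2 x" if "x \<in> I" for x
    using sol_eq_scaled_if_fp_eq_scaled[OF assms(1-3) _ _ _ _ scaled[OF z0] scaled[OF z1] that]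
      fs z0 \<open>e > 0\<close> \<open>V \<subseteq> {z. fst z \<in> I}\<close> by (auto simp: fundamental_system_def)
  then have "\<forall>x\<in>I. 1 * p1 x + (- c) * p2 x = 0" by simp
  with fs have "(1::real) = 0" unfolding fundamental_system_def by blast
  then show False by simp
qed

lemma first_integral_darboux_quotient:
  fixes F G Fx Fy Gx Gy P Q k :: "real \<times> real \<Rightarrow> real"
  assumes dF: "\<And>z. z \<in> U \<Longrightarrow> (F has_derivative (\<lambda>h. Fx z * fst h + Fy z * snd h)) (at z)"
    and dG: "\<And>z. z \<in> U \<Longrightarrow> (G has_derivative (\<lambda>h. Gx z * fst h + Gy z * snd h)) (at z)"
    and cont: "continuous_on U Fx" "continuous_on U Fy" "continuous_on U Gx" "continuous_on U Gy"
    and G_nz: "\<And>z. z \<in> U \<Longrightarrow> G z \<noteq> 0"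
    and cofactor_F: "\<And>z. z \<in> U \<Longrightarrow> P z * Fx z + Q z * Fy z = k z * F z"
    and cofactor_G: "\<And>z. z \<in> U \<Longrightarrow> P z * Gx z + Q z * Gy z = k z * G z"
    and not_proportional: "\<And>V c. open V \<Longrightarrow> V \<noteq> {} \<Longrightarrow> V \<subseteq> U \<Longrightarrow> \<exists>z\<in>V. F z \<noteq> c * G z"
  shows "first_integral P Q U (\<lambda>z. F z / G z)"
  unfolding first_integral_def
proof (intro conjI exI allI impI ballI notI)
  define Hx where "Hx z = (Fx z * G z - F z * Gx z) / (G z * G z)" for z
  define Hy where "Hy z = (Fy z * G z - F z * Gy z) / (G z * G z)" for z
  show "((\<lambda>z. F z / G z) has_derivative (\<lambda>h. Hx z * fst h + Hy z * snd h)) (at z)" if "z \<in> U" for z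
    by (rule has_derivative_eq_rhs[OF has_derivative_divide'[OF dF[OF that] dG[OF that] G_nz[OF that]]])
       (use G_nz[OF that] in \<open>auto simp: fun_eq_iff Hx_def Hy_def field_simps\<close>)
  have "continuous_on U F" "continuous_on U G"
    using dF dG by (auto intro!: continuous_at_imp_continuous_on has_derivative_continuous)
  then show "continuous_on U Hx" "continuous_on U Hy"
    unfolding Hx_def Hy_def using cont G_nz by (auto intro!: continuous_intros)
  show "P z * Hx z + Q z * Hy z = 0" if "z \<in> U" for z
  proof -
    have "P z * Hx z + Q z * Hy z
        = (G z * (P z * Fx z + Q z * Fy z) - F z * (P z * Gx z + Q z * Gy z)) / (G z * G z)"
      by (simp add: Hx_def Hy_def add_divide_distrib diff_divide_distrib algebra_simps)
    then show ?thesis using cofactor_F[OF that] cofactor_G[OF that] by simp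
  qed
next
  fix V assume V: "open V \<and> V \<noteq> {} \<and> V \<subseteq> U" and "\<exists>c. \<forall>z\<in>V. F z / G z = c"
  then obtain c where "\<forall>z\<in>V. F z / G z = c" by blast
  moreover have "G z \<noteq> 0" if "z \<in> V" for z using V G_nz that by blast
  ultimately have "\<forall>z\<in>V. F z = c * G z" by (simp add: divide_eq_eq)
  with not_proportional V show False by blast
qed

theorem mainTheorem10:
  fixes n :: real and Om L :: "real poly" and I :: "real set"
  assumes "Om \<noteq> 0" and "degree Om \<le> 2" and "degree L \<le> 1"
    and "open I" and "connected I" and "I \<noteq> {}"
    and "\<forall>x\<in>I. poly Om x \<noteq> 0"
  shows "(\<forall>p. is_sol Om L n I p \<longrightarrow>
            (\<forall>x\<in>I. \<forall>y::real.
               poly Om x * deriv (\<lambda>t. fp Om L p t y) x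
               + Qsys Om L n x y * deriv (\<lambda>s. fp Om L p x s) y
               = (y + poly L x) * fp Om L p x y))
       \<and> (\<forall>p1 p2. fundamental_system Om L n I p1 p2 \<longrightarrow>
            first_integral (\<lambda>(x, y). poly Om x) (\<lambda>(x, y). Qsys Om L n x y)
              {(x, y). x \<in> I \<and> fp Om L p2 x y \<noteq> 0}
              (\<lambda>(x, y). fp Om L p1 x y / fp Om L p2 x y))"
proof (intro conjI allI impI ballI)
  fix p x y assume p: "is_sol Om L n I p" and "x \<in> I"
  then have "C2_on I p" by (simp add: is_sol_def)
  with fp_darboux[OF p \<open>x \<in> I\<close>] show "poly Om x * deriv (\<lambda>t. fp Om L p t y) x
      + Qsys Om L n x y * deriv (\<lambda>s. fp Om L p x s) y = (y + poly L x) * fp Om L p x y"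
    by (simp add: DERIV_imp_deriv[OF fp_has_real_derivative_x[OF _ \<open>x \<in> I\<close>]]
        DERIV_imp_deriv[OF fp_has_real_derivative_y])
next
  fix p1 p2 assume fs: "fundamental_system Om L n I p1 p2"
  then have sols: "is_sol Om L n I p1" "is_sol Om L n I p2"
    by (simp_all add: fundamental_system_def)
  then have C2: "C2_on I p1" "C2_on I p2" by (simp_all add: is_sol_def)
  let ?U = "{z. fst z \<in> I \<and> fp Om L p2 (fst z) (snd z) \<noteq> 0}"
  have U: "?U \<subseteq> {z. fst z \<in> I}" by auto
  have "first_integral (\<lambda>z. poly Om (fst z)) (\<lambda>z. Qsys Om L n (fst z) (snd z)) ?U
      (\<lambda>z. fp Om L p1 (fst z) (snd z) / fp Om L p2 (fst z) (snd z))"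
  proof (rule first_integral_darboux_quotient[OF fp_has_derivative[OF C2(1)] fp_has_derivative[OF C2(2)]
        continuous_on_subset[OF continuous_on_fp_x[OF C2(1)] U]
        continuous_on_subset[OF continuous_on_fst_compose[OF C2_on_continuous_on(1)[OF C2(1)]] U]
        continuous_on_subset[OF continuous_on_fp_x[OF C2(2)] U]
        continuous_on_subset[OF continuous_on_fst_compose[OF C2_on_continuous_on(1)[OF C2(2)]] U]])
    fix V c assume "open V" "V \<noteq> {}" "V \<subseteq> ?U"
    with U show "\<exists>z\<in>V. fp Om L p1 (fst z) (snd z) \<noteq> c * fp Om L p2 (fst z) (snd z)"
      by (intro fp_not_locally_proportional[OF assms(4,5,7) fs]) auto
  qed (use fp_darboux[OF sols(1)] fp_darboux[OF sols(2)] in auto)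
  then show "first_integral (\<lambda>(x, y). poly Om x) (\<lambda>(x, y). Qsys Om L n x y)
      {(x, y). x \<in> I \<and> fp Om L p2 x y \<noteq> 0} (\<lambda>(x, y). fp Om L p1 x y / fp Om L p2 x y)"
    by (simp add: case_prod_unfold)
qed

end
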